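(* Under the standing assumptions below, let $\kappa>0$ and $\tau\ge L_{\nabla P_\rho}+\kappa$. Then for each $(x,z,u,v)\in\mathcal X\times\mathcal Y\times\mathbb R^{d_y}\times\mathbb R^{d_\lambda}$ the problem $\max_{y\in\mathcal Y,\lambda\in\Lambda}Q(x,z,u,v,y,\lambda)$ has a unique maximizer $(y_*(x,z,u,v),\lambda_*(x,z,u,v))$, and for any two such points $w^1=(x^1,z^1,u^1,v^1)$, $w^2=(x^2,z^2,u^2,v^2)$, $$\|(y_*(w^1),\lambda_*(w^1))-(y_*(w^2),\lambda_*(w^2))\|\le (L_{\nabla P_\rho}+\tau)\kappa^{-1}\|w^1-w^2\|.$$ Moreover $\vartheta$ is continuously differentiable with $$\nabla\vartheta(x,z,u,v)=\Big(\nabla_x f(x,y_*,\lambda_* ),\ \rho\nabla_1 g(z,\lambda_* ),\ \tau(y_*-u),\ \tau(\lambda_*-v)\Big),$$ where $(y_*,\lambda_* )=(y_*(x,z,u,v),\lambda_*(x,z,u,v))$ and $\nabla_1 g$ denotes the gradient of $g$ in its first argument, and $$\|\nabla\vartheta(w^1)-\nabla\vartheta(w^2)\|\le L_{\nabla\vartheta}\|w^1-w^2\|,\qquad L_{\nabla\vartheta}:=(L_{\nabla f}+\rho L_{\nabla g}+2\tau)\big(1+(L_{\nabla P_\rho}+\tau)\kappa^{-1}\big).$$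
   Context: Standing setting. $\mathcal X\subset\mathbb R^{d_x}$, $\mathcal Y\subset\mathbb R^{d_y}$, $\Lambda\subset\mathbb R^{d_\lambda}$ are nonempty convex compact sets. $f(x,y,\lambda):=\bar f(x,y)+\lambda^T(Ax+By-c)$ with $\bar f$ continuously differentiable, $A,B,c$ fixed matrices/vector of compatible sizes; $L_{\nabla f}>0$ is a Lipschitz constant of $\nabla f$ on $\mathcal X\times\mathcal Y\times\Lambda$. $g:\mathbb R^{d_y}\times\mathbb R^{d_\lambda}\to\mathbb R$ is continuously differentiable, $\nabla g$ is $L_{\nabla g}$-Lipschitz on $\mathcal Y\times\Lambda$, and $g(\cdot,\lambda)$ is convex for each $\lambda\in\Lambda$. Moreover $g$ has a saddle point: there is $(z^*,\lambda^* )\in\mathcal Y\times\Lambda$ with $g(z^*,\lambda^* )=\max_{\lambda\in\Lambda}\min_{z\in\mathcal Y}g(z,\lambda)=\min_{z\in\mathcal Y}\max_{\lambda\in\Lambda}g(z,\lambda)$. For $\rho>0$: $P_\rho(x,y,\lambda,z):=f(x,y,\lambda)-\rho(g(y,\lambda)-g(z,\lambda))$ and $L_{\nabla P_\rho}:=L_{\nabla f}+2\rho L_{\nabla g}$ (a Lipschitz constant of $\nabla P_\rho$). For $\tau>0$ and $(u,v)\in\mathbb R^{d_y}\times\mathbb R^{d_\lambda}$: $Q(x,z,u,v,y,\lambda):=P_\rho(x,y,\lambda,z)-\frac{\tau}{2}\|(y,\lambda)-(u,v)\|^2$ and $\vartheta(x,z,u,v):=\max_{y\in\mathcal Y,\lambda\in\Lambda}Q(x,z,u,v,y,\lambda)$,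 defined on $\mathcal X\times\mathcal Y\times\mathbb R^{d_y}\times\mathbb R^{d_\lambda}$. Norms are Euclidean. *)

theory Defs
  imports "HOL-Analysis.Analysis"
begin

definition grad :: "('a::euclidean_space \<Rightarrow> real) \<Rightarrow> 'a \<Rightarrow> 'a" where
  "grad F p = (THE G. (F has_derivative (\<lambda>h. G \<bullet> h)) (at p))"

definition ffun :: "((real^'dx) \<times> (real^'dy) \<Rightarrow> real) \<Rightarrow> (real^'dx^'dl) \<Rightarrow> (real^'dy^'dl) \<Rightarrow> (real^'dl)
    \<Rightarrow> ((real^'dx) \<times> (real^'dy)) \<times> (real^'dl) \<Rightarrow> real" where
  "ffun fbar A B c = (\<lambda>((x, y), l). fbar (x, y) + l \<bullet> (A *v x + B *v y - c))"

definition Pfun :: "((real^'dx) \<times> (real^'dy) \<Rightarrow> real) \<Rightarrow> (real^'dx^'dl) \<Rightarrow> (real^'dy^'dl) \<Rightarrow> (real^'dl)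
    \<Rightarrow> ((real^'dy) \<times> (real^'dl) \<Rightarrow> real) \<Rightarrow> real
    \<Rightarrow> (real^'dx) \<Rightarrow> (real^'dy) \<Rightarrow> (real^'dl) \<Rightarrow> (real^'dy) \<Rightarrow> real" where
  "Pfun fbar A B c g rho x y l z = ffun fbar A B c ((x, y), l) - rho * (g (y, l) - g (z, l))"

definition Qfun :: "((real^'dx) \<times> (real^'dy) \<Rightarrow> real) \<Rightarrow> (real^'dx^'dl) \<Rightarrow> (real^'dy^'dl) \<Rightarrow> (real^'dl)
    \<Rightarrow> ((real^'dy) \<times> (real^'dl) \<Rightarrow> real) \<Rightarrow> real \<Rightarrow> real
    \<Rightarrow> (real^'dx) \<Rightarrow> (real^'dy) \<Rightarrow> (real^'dy) \<Rightarrow> (real^'dl) \<Rightarrow> (real^'dy) \<Rightarrow> (real^'dl) \<Rightarrow> real" where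
  "Qfun fbar A B c g rho tau x z u v y l =
     Pfun fbar A B c g rho x y l z - tau / 2 * (norm ((y, l) - (u, v)))\<^sup>2"

definition theta :: "((real^'dx) \<times> (real^'dy) \<Rightarrow> real) \<Rightarrow> (real^'dx^'dl) \<Rightarrow> (real^'dy^'dl) \<Rightarrow> (real^'dl)
    \<Rightarrow> ((real^'dy) \<times> (real^'dl) \<Rightarrow> real) \<Rightarrow> real \<Rightarrow> real \<Rightarrow> (real^'dy) set \<Rightarrow> (real^'dl) set
    \<Rightarrow> (real^'dx) \<times> (real^'dy) \<times> (real^'dy) \<times> (real^'dl) \<Rightarrow> real" where
  "theta fbar A B c g rho tau Y Lam = (\<lambda>(x, z, u, v).
     (SUP p \<in> Y \<times> Lam. Qfun fbar A B c g rho tau x z u v (fst p) (snd p)))"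

end

theory Submission
  imports Defs
begin

(*
  Since tau exceeds the Lipschitz constant Lf + 2 rho Lg of the (y, lambda)-gradient of P_rho
  by kappa, Q is kappa-strongly concave in p = (y, lambda); by compactness it has a maximizer
  p*(w). Adding the first-order optimality conditions at p*(w1) and p*(w2) bounds
  kappa |p*(w1) - p*(w2)| by the change of the p-gradient of Q between the parameters w1 and w2,
  which gives uniqueness and the Lipschitz bound. The value function is squeezed between
  Q(w', p*(w)) and Q(w, p*(w)) plus the linearization of Q(., p*(w')), so it is differentiable
  with gradient the w-gradient of Q at p*(w) (Danskin); this gradient is Lipschitz because the
  w-gradient of Q is Lipschitz in both arguments and p* is Lipschitz.
*)

lemma grad_eqI:
  fixes F :: "'a::euclidean_space \<Rightarrow> real"
  assumes "(F has_derivative (\<lambda>h. G \<bullet> h)) (at p)"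
  shows "grad F p = G"
  unfolding grad_def
proof (rule the_equality)
  fix G' assume "(F has_derivative (\<lambda>h. G' \<bullet> h)) (at p)"
  from this assms have "(\<lambda>h. G' \<bullet> h) = (\<lambda>h. G \<bullet> h)"
    by (rule has_derivative_unique)
  then show "G' = G"
    by (metis vector_eq_rdot inner_commute)
qed fact

lemma has_derivative_grad:
  fixes F :: "'a::euclidean_space \<Rightarrow> real"
  assumes "F differentiable (at p)"
  shows "(F has_derivative (\<lambda>h. grad F p \<bullet> h)) (at p)"
proof -
  obtain F' where F': "(F has_derivative F') (at p)"
    using assms differentiable_def by blast
  have "F' = (\<lambda>h. adjoint F' 1 \<bullet> h)"
    using adjoint_clauses(2)[OF has_derivative_linear[OF F'], of 1] by (auto simp: fun_eq_iff)
  with F' show ?thesis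
    using grad_eqI by metis
qed

lemma has_derivative_grad_chain:
  fixes F :: "'a::euclidean_space \<Rightarrow> real"
  assumes "F differentiable (at (f x))" "(f has_derivative f') (at x within S)"
  shows "((\<lambda>x. F (f x)) has_derivative (\<lambda>h. grad F (f x) \<bullet> f' h)) (at x within S)"
  using has_derivative_compose[OF assms(2) has_derivative_grad[OF assms(1)]] .

lemma grad_partial_fst:
  fixes F :: "'a::euclidean_space \<times> 'b::euclidean_space \<Rightarrow> real"
  assumes "F differentiable (at (x, y))"
  shows "grad (\<lambda>x'. F (x', y)) x = fst (grad F (x, y))"
proof (rule grad_eqI)
  have "((\<lambda>x'. (x', y)) has_derivative (\<lambda>h. (h, 0))) (at x)"
    by (auto intro!: derivative_eq_intros)
  from has_derivative_compose[OF this has_derivative_grad[OF assms]]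
  show "((\<lambda>x'. F (x', y)) has_derivative (\<lambda>h. fst (grad F (x, y)) \<bullet> h)) (at x)"
    by (simp add: inner_Pair_0)
qed

section \<open>Maximizers of strongly concave functions\<close>

lemma maximizer_variational_inequality:
  fixes F :: "'a::real_normed_vector \<Rightarrow> real"
  assumes "convex S" "a \<in> S" "b \<in> S" "\<forall>q\<in>S. F q \<le> F a"
    and "(F has_derivative F') (at a within S)"
  shows "F' (b - a) \<le> 0"
proof (rule ccontr)
  assume "\<not> F' (b - a) \<le> 0"
  define seg where "seg t = a + t *\<^sub>R (b - a)" for t :: real
  have seg_S: "seg t \<in> S" if "t \<in> {0..1}" for t
    using assms(1-3) that convexD_alt[of S a b t] by (simp add: seg_def algebra_simps)
  have "(seg has_derivative (\<lambda>t. t *\<^sub>R (b - a))) (at 0 within {0..1})"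
    unfolding seg_def by (auto intro!: derivative_eq_intros)
  moreover have "seg ` {0..1} \<subseteq> S"
    using seg_S by auto
  then have "(F has_derivative F') (at (seg 0) within seg ` {0..1})"
    unfolding seg_def by (simp add: has_derivative_subset[OF assms(5)])
  ultimately have "((F \<circ> seg) has_derivative (\<lambda>t. F' (t *\<^sub>R (b - a)))) (at 0 within {0..1})"
    by (auto dest: diff_chain_within simp: o_def)
  moreover have "(\<lambda>t. F' (t *\<^sub>R (b - a))) = (*) (F' (b - a))"
    using linear_cmul[OF has_derivative_linear[OF assms(5)]] by (auto simp: fun_eq_iff)
  ultimately have "((F \<circ> seg) has_real_derivative F' (b - a)) (at 0 within {0..1})"
    by (simp add: has_field_derivative_def)
  from has_real_derivative_pos_inc_right[OF this] \<open>\<not> F' (b - a) \<le> 0\<close>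
  obtain d where "d > 0"
    and inc: "\<And>t. t > 0 \<Longrightarrow> t \<in> {0..1} \<Longrightarrow> t < d \<Longrightarrow> F (seg 0) < F (seg t)"
    by auto
  let ?t = "min 1 (d / 2)"
  have "F a < F (seg ?t)"
    using inc[of ?t] \<open>d > 0\<close> by (simp add: seg_def)
  moreover have "F (seg ?t) \<le> F a"
    using assms(4) seg_S[of ?t] \<open>d > 0\<close> by simp
  ultimately show False by simp
qed

lemma inner_diff_le_lipschitz:
  fixes E :: "'a::real_inner \<Rightarrow> 'a"
  assumes "L-lipschitz_on S E" "p \<in> S" "q \<in> S"
  shows "(E p - E q) \<bullet> (p - q) \<le> L * (norm (p - q))\<^sup>2"
proof -
  have "(E p - E q) \<bullet> (p - q) \<le> norm (E p - E q) * norm (p - q)"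
    by (metis Cauchy_Schwarz_ineq2 abs_le_D1)
  also have "\<dots> \<le> L * norm (p - q) * norm (p - q)"
    using lipschitz_on_normD[OF assms] by (simp add: mult_right_mono)
  finally show ?thesis
    by (simp add: power2_eq_square mult.assoc)
qed

text \<open>Add the first-order optimality conditions at \<open>p1\<close> and \<open>p2\<close> and use the strong
  monotonicity of \<open>G\<close>.\<close>
lemma maximizers_norm_diff_le:
  fixes p1 p2 :: "'a::real_inner"
  assumes "convex S" "p1 \<in> S" "p2 \<in> S" "kappa > 0"
    and max1: "\<forall>q\<in>S. F q \<le> F p1" and max2: "\<forall>q\<in>S. F' q \<le> F' p2"
    and der1: "(F has_derivative (\<lambda>h. G p1 \<bullet> h)) (at p1 within S)"
    and der2: "(F' has_derivative (\<lambda>h. G' \<bullet> h)) (at p2 within S)"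
    and mono: "(G p1 - G p2) \<bullet> (p1 - p2) \<le> - kappa * (norm (p1 - p2))\<^sup>2"
  shows "kappa * norm (p1 - p2) \<le> norm (G p2 - G')"
proof -
  let ?d = "norm (p1 - p2)"
  have vi1: "G p1 \<bullet> (p2 - p1) \<le> 0"
    using maximizer_variational_inequality[OF assms(1,2,3) max1 der1] .
  have vi2: "G' \<bullet> (p1 - p2) \<le> 0"
    using maximizer_variational_inequality[OF assms(1,3,2) max2 der2] .
  have "kappa * ?d\<^sup>2 \<le> (G p2 - G') \<bullet> (p1 - p2)"
    using mono vi1 vi2 by (simp add: inner_diff_left inner_diff_right)
  also have "\<dots> \<le> norm (G p2 - G') * ?d"
    by (metis Cauchy_Schwarz_ineq2 abs_le_D1)
  finally have "(kappa * ?d) * ?d \<le> norm (G p2 - G') * ?d"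
    by (simp add: power2_eq_square mult.assoc)
  then show ?thesis
    using \<open>kappa > 0\<close> by (cases "?d = 0") (auto simp: mult_le_cancel_right)
qed

section \<open>Differentiability of value functions\<close>

lemma lipschitz_gradient_quadratic_bound:
  fixes F :: "'a::real_inner \<Rightarrow> real"
  assumes "convex S" "a \<in> S" "b \<in> S"
    and der: "\<And>q. q \<in> S \<Longrightarrow> (F has_derivative (\<lambda>h. G q \<bullet> h)) (at q within S)"
    and lip: "L-lipschitz_on S G"
  shows "\<bar>F b - F a - G a \<bullet> (b - a)\<bar> \<le> L * (norm (b - a))\<^sup>2"
proof -
  let ?T = "closed_segment a b"
  have T: "?T \<subseteq> S"
    by (rule closed_segment_subset[OF assms(2,3,1)])
  have "onorm (\<lambda>h. G q \<bullet> h - G a \<bullet> h) \<le> L * norm (b - a)" if "q \<in> ?T" for q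
  proof (rule onorm_bound)
    show "0 \<le> L * norm (b - a)"
      using lipschitz_on_nonneg[OF lip] by simp
    fix h
    have "\<bar>(G q - G a) \<bullet> h\<bar> \<le> norm (G q - G a) * norm h"
      by (rule Cauchy_Schwarz_ineq2)
    also have "\<dots> \<le> L * norm (q - a) * norm h"
      using lipschitz_on_normD[OF lip _ \<open>a \<in> S\<close>, of q] that T
      by (intro mult_right_mono) auto
    also have "\<dots> \<le> L * norm (b - a) * norm h"
      using segment_bound1[OF that] lipschitz_on_nonneg[OF lip]
      by (intro mult_right_mono mult_left_mono) auto
    finally show "norm (G q \<bullet> h - G a \<bullet> h) \<le> L * norm (b - a) * norm h"
      by (simp add: inner_diff_left)
  qed
  moreover have "a + t *\<^sub>R (b - a) \<in> ?T" if "t \<in> {0..1}" for t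
    using that by (auto simp: closed_segment_def algebra_simps intro!: exI[of _ t])
  ultimately have "norm (F b - F a - G a \<bullet> (b - a)) \<le> norm (b - a) * (L * norm (b - a))"
    using T by (intro differentiable_bound_linearization[where S = ?T and f' = "\<lambda>q h. G q \<bullet> h"])
      (auto intro: has_derivative_subset[OF der] simp: fun_diff_def)
  then show ?thesis
    by (simp add: power2_eq_square mult_ac)
qed

lemma has_derivative_within_quadratic_remainder:
  assumes "bounded_linear F'"
    and "\<And>y. y \<in> T \<Longrightarrow> norm (f y - f x - F' (y - x)) \<le> M * (norm (y - x))\<^sup>2"
  shows "(f has_derivative F') (at x within T)"
  unfolding has_derivative_within
proof (intro conjI)
  have "\<forall>\<^sub>F y in at x within T.
      norm ((1 / norm (y - x)) *\<^sub>R (f y - (f x + F' (y - x)))) \<le> M * norm (y - x)"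
    unfolding eventually_at_filter
  proof (intro always_eventually allI impI)
    fix y assume "y \<noteq> x" "y \<in> T"
    then have "norm (f y - f x - F' (y - x)) / norm (y - x) \<le> M * (norm (y - x))\<^sup>2 / norm (y - x)"
      using assms(2) by (simp add: divide_right_mono)
    with \<open>y \<noteq> x\<close> show "norm ((1 / norm (y - x)) *\<^sub>R (f y - (f x + F' (y - x)))) \<le> M * norm (y - x)"
      by (simp add: power2_eq_square diff_diff_eq)
  qed
  moreover have "((\<lambda>y. M * norm (y - x)) \<longlongrightarrow> 0) (at x within T)"
    by (auto intro!: tendsto_eq_intros)
  ultimately show "((\<lambda>y. (1 / norm (y - x)) *\<^sub>R (f y - (f x + F' (y - x)))) \<longlongrightarrow> 0) (at x within T)"
    by (rule Lim_null_comparison)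
qed fact

lemma lipschitz_on_gradient_at_maximizer:
  fixes Dw :: "'w::metric_space \<Rightarrow> 'p::metric_space \<Rightarrow> 'v::metric_space"
  assumes "W \<noteq> {}"
    and lip_w: "\<And>p. p \<in> S \<Longrightarrow> L-lipschitz_on W (\<lambda>w. Dw w p)"
    and lip_p: "\<And>w. w \<in> W \<Longrightarrow> L-lipschitz_on S (Dw w)"
    and P_S: "\<And>w. w \<in> W \<Longrightarrow> P w \<in> S"
    and lip_P: "K-lipschitz_on W P"
  shows "(L * (1 + K))-lipschitz_on W (\<lambda>w. Dw w (P w))"
proof (rule lipschitz_onI)
  fix w1 w2 assume w: "w1 \<in> W" "w2 \<in> W"
  have "dist (Dw w1 (P w1)) (Dw w2 (P w2))
      \<le> dist (Dw w1 (P w1)) (Dw w1 (P w2)) + dist (Dw w1 (P w2)) (Dw w2 (P w2))"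
    by (rule dist_triangle)
  also have "\<dots> \<le> L * dist (P w1) (P w2) + L * dist w1 w2"
    using lipschitz_onD[OF lip_p P_S P_S] lipschitz_onD[OF lip_w w] w P_S by (intro add_mono) auto
  also have "\<dots> \<le> L * (K * dist w1 w2) + L * dist w1 w2"
    using lipschitz_onD[OF lip_P w] lipschitz_on_nonneg[OF lip_p[OF w(1)]] by (simp add: mult_left_mono)
  finally show "dist (Dw w1 (P w1)) (Dw w2 (P w2)) \<le> L * (1 + K) * dist w1 w2"
    by (simp add: algebra_simps)
next
  obtain w where "w \<in> W"
    using \<open>W \<noteq> {}\<close> by blast
  then show "0 \<le> L * (1 + K)"
    using lipschitz_on_nonneg[OF lip_p] lipschitz_on_nonneg[OF lip_P] by simp
qed

text \<open>Danskin's theorem for a Lipschitz maximizer: since \<open>P w\<close> maximizes \<open>Phi w\<close>, the value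
  \<open>Phi w' (P w')\<close> is squeezed between \<open>Phi w' (P w)\<close> and \<open>Phi w (P w)\<close> plus the first-order change
  of \<open>Phi \<cdot> (P w')\<close>, so both deviations are quadratic in \<open>w' - w\<close>.\<close>
lemma value_function_has_derivative:
  fixes Phi :: "'w::real_inner \<Rightarrow> 'p::metric_space \<Rightarrow> real"
  assumes "convex W" "w \<in> W"
    and der: "\<And>w p. w \<in> W \<Longrightarrow> p \<in> S \<Longrightarrow> ((\<lambda>w. Phi w p) has_derivative (\<lambda>h. Dw w p \<bullet> h)) (at w within W)"
    and lip_w: "\<And>p. p \<in> S \<Longrightarrow> L-lipschitz_on W (\<lambda>w. Dw w p)"
    and lip_p: "\<And>w. w \<in> W \<Longrightarrow> L-lipschitz_on S (Dw w)"
    and P_S: "\<And>w. w \<in> W \<Longrightarrow> P w \<in> S"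
    and P_max: "\<And>w q. w \<in> W \<Longrightarrow> q \<in> S \<Longrightarrow> Phi w q \<le> Phi w (P w)"
    and lip_P: "K-lipschitz_on W P"
  shows "((\<lambda>w. Phi w (P w)) has_derivative (\<lambda>h. Dw w (P w) \<bullet> h)) (at w within W)"
proof (rule has_derivative_within_quadratic_remainder[OF bounded_linear_inner_right])
  fix w' assume "w' \<in> W"
  let ?h = "w' - w" and ?p = "P w" and ?p' = "P w'"
  have quad: "\<bar>Phi w' p - Phi w p - Dw w p \<bullet> ?h\<bar> \<le> L * (norm ?h)\<^sup>2" if "p \<in> S" for p
    using lipschitz_gradient_quadratic_bound[OF \<open>convex W\<close> \<open>w \<in> W\<close> \<open>w' \<in> W\<close> der lip_w] that by blast
  have "(Dw w ?p' - Dw w ?p) \<bullet> ?h \<le> norm (Dw w ?p' - Dw w ?p) * norm ?h"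
    by (metis Cauchy_Schwarz_ineq2 abs_le_D1)
  also have "\<dots> \<le> L * (K * norm ?h) * norm ?h"
  proof (intro mult_right_mono norm_ge_zero)
    have "norm (Dw w ?p' - Dw w ?p) \<le> L * dist ?p' ?p"
      using lipschitz_onD[OF lip_p P_S P_S] \<open>w \<in> W\<close> \<open>w' \<in> W\<close> by (simp add: dist_norm)
    also have "\<dots> \<le> L * (K * norm ?h)"
      using lipschitz_onD[OF lip_P \<open>w' \<in> W\<close> \<open>w \<in> W\<close>] lipschitz_on_nonneg[OF lip_p[OF \<open>w \<in> W\<close>]]
      by (simp add: dist_norm mult_left_mono)
    finally show "norm (Dw w ?p' - Dw w ?p) \<le> L * (K * norm ?h)" .
  qed
  finally have gap: "(Dw w ?p' - Dw w ?p) \<bullet> ?h \<le> L * K * (norm ?h)\<^sup>2"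
    by (simp add: power2_eq_square mult_ac)
  have "Phi w' ?p' - Phi w ?p - Dw w ?p \<bullet> ?h \<le> Phi w' ?p' - Phi w ?p' - Dw w ?p \<bullet> ?h"
    using P_max[OF \<open>w \<in> W\<close> P_S[OF \<open>w' \<in> W\<close>]] by simp
  also have "\<dots> \<le> L * (1 + K) * (norm ?h)\<^sup>2"
    using quad[OF P_S[OF \<open>w' \<in> W\<close>]] gap by (simp add: inner_diff_left algebra_simps)
  finally have upper: "Phi w' ?p' - Phi w ?p - Dw w ?p \<bullet> ?h \<le> L * (1 + K) * (norm ?h)\<^sup>2" .
  have "- (L * (1 + K) * (norm ?h)\<^sup>2) \<le> - (L * (norm ?h)\<^sup>2)"
    using lipschitz_on_nonneg[OF lip_p[OF \<open>w \<in> W\<close>]] lipschitz_on_nonneg[OF lip_P]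
    by (simp add: algebra_simps)
  also have "\<dots> \<le> Phi w' ?p - Phi w ?p - Dw w ?p \<bullet> ?h"
    using quad[OF P_S[OF \<open>w \<in> W\<close>]] by simp
  also have "\<dots> \<le> Phi w' ?p' - Phi w ?p - Dw w ?p \<bullet> ?h"
    using P_max[OF \<open>w' \<in> W\<close> P_S[OF \<open>w \<in> W\<close>]] by simp
  finally show "norm (Phi w' ?p' - Phi w ?p - Dw w ?p \<bullet> ?h) \<le> L * (1 + K) * (norm ?h)\<^sup>2"
    using upper by simp
qed

lemma lipschitz_on_comp_nonexpansive:
  assumes "L-lipschitz_on T f" "\<phi> ` S \<subseteq> T"
    and "\<And>a b. a \<in> S \<Longrightarrow> b \<in> S \<Longrightarrow> dist (\<phi> a) (\<phi> b) \<le> dist a b"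
  shows "L-lipschitz_on S (\<lambda>a. f (\<phi> a))"
proof (rule lipschitz_onI)
  fix a b assume "a \<in> S" "b \<in> S"
  then show "dist (f (\<phi> a)) (f (\<phi> b)) \<le> L * dist a b"
    using lipschitz_onD[OF assms(1)] assms(3)[of a b] lipschitz_on_nonneg[OF assms(1)] assms(2)
    by (meson image_subset_iff mult_left_mono order_trans)
qed (rule lipschitz_on_nonneg[OF assms(1)])

lemma nonexpansive_comp_lipschitz_on:
  assumes "L-lipschitz_on S f" "\<And>a b. dist (\<psi> a) (\<psi> b) \<le> dist a b"
  shows "L-lipschitz_on S (\<lambda>a. \<psi> (f a))"
  using lipschitz_onD[OF assms(1)] order_trans[OF assms(2)] lipschitz_on_nonneg[OF assms(1)]
  by (intro lipschitz_onI) blast+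

lemma dist_fst_fst_le: "dist (fst (fst r)) (fst (fst s)) \<le> dist r s"
  by (meson dist_fst_le order_trans)

lemma lipschitz_on_Pair_add:
  assumes "L-lipschitz_on S f" "M-lipschitz_on S g"
  shows "(L + M)-lipschitz_on S (\<lambda>a. (f a, g a))"
  using lipschitz_on_Pair[OF assms] sqrt_sum_squares_le_sum[of L M]
    lipschitz_on_nonneg[OF assms(1)] lipschitz_on_nonneg[OF assms(2)]
  by (auto intro: lipschitz_on_mono)

lemma lipschitz_on_scaleR_shift:
  fixes c :: "'a::real_normed_vector"
  assumes "0 \<le> tau"
  shows "tau-lipschitz_on S (\<lambda>p. tau *\<^sub>R (p - c))"
proof (rule lipschitz_onI)
  fix p q :: 'a
  have "tau *\<^sub>R (p - c) - tau *\<^sub>R (q - c) = tau *\<^sub>R (p - q)"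
    by (simp add: algebra_simps)
  then show "dist (tau *\<^sub>R (p - c)) (tau *\<^sub>R (q - c)) \<le> tau * dist p q"
    using assms by (simp add: dist_norm)
qed fact

section \<open>The proximal objective\<close>

locale proximal_saddle =
  fixes F :: "('x::euclidean_space \<times> 'y::euclidean_space) \<times> 'l::euclidean_space \<Rightarrow> real"
    and g :: "'y \<times> 'l \<Rightarrow> real"
    and X :: "'x set" and Y :: "'y set" and Lam :: "'l set"
    and Lf Lg rho tau kappa :: real
  assumes F_diff: "\<And>q. F differentiable (at q)"
    and g_diff: "\<And>q. g differentiable (at q)"
    and F_lip: "Lf-lipschitz_on ((X \<times> Y) \<times> Lam) (grad F)"
    and g_lip: "Lg-lipschitz_on (Y \<times> Lam) (grad g)"
    and X: "convex X" "X \<noteq> {}"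
    and Y: "convex Y" "compact Y" "Y \<noteq> {}"
    and Lam: "convex Lam" "compact Lam" "Lam \<noteq> {}"
    and rho: "0 \<le> rho" and kappa: "0 < kappa"
    and tau: "Lf + 2 * rho * Lg + kappa \<le> tau"
begin

abbreviation W :: "('x \<times> 'y \<times> 'y \<times> 'l) set" where
  "W \<equiv> X \<times> Y \<times> UNIV \<times> UNIV"

text \<open>The parameter is \<open>w = (x, z, u, v)\<close> and the variable \<open>p = (y, \<lambda>)\<close>,
  so \<open>snd (snd w) = (u, v)\<close>.\<close>
definition Q :: "'x \<times> 'y \<times> 'y \<times> 'l \<Rightarrow> 'y \<times> 'l \<Rightarrow> real" where
  "Q w p = F ((fst w, fst p), snd p) - rho * (g p - g (fst (snd w), snd p))
     - tau / 2 * (norm (p - snd (snd w)))\<^sup>2"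

definition gradp_P :: "'x \<Rightarrow> 'y \<Rightarrow> 'y \<times> 'l \<Rightarrow> 'y \<times> 'l" where
  "gradp_P x z p = (snd (fst (grad F ((x, fst p), snd p))), snd (grad F ((x, fst p), snd p)))
     - rho *\<^sub>R grad g p + rho *\<^sub>R (0, snd (grad g (z, snd p)))"

definition gradp_Q :: "'x \<times> 'y \<times> 'y \<times> 'l \<Rightarrow> 'y \<times> 'l \<Rightarrow> 'y \<times> 'l" where
  "gradp_Q w p = gradp_P (fst w) (fst (snd w)) p - tau *\<^sub>R (p - snd (snd w))"

definition gradw_Q :: "'x \<times> 'y \<times> 'y \<times> 'l \<Rightarrow> 'y \<times> 'l \<Rightarrow> 'x \<times> 'y \<times> 'y \<times> 'l" where
  "gradw_Q w p = (fst (fst (grad F ((fst w, fst p), snd p))),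
     rho *\<^sub>R fst (grad g (fst (snd w), snd p)), tau *\<^sub>R (p - snd (snd w)))"

lemma has_derivative_Q_p: "(Q w has_derivative (\<lambda>h. gradp_Q w p \<bullet> h)) (at p)"
  unfolding Q_def power2_norm_eq_inner
  by (rule has_derivative_eq_rhs, (rule has_derivative_grad_chain[of F] has_derivative_grad_chain[of g]
        derivative_eq_intros F_diff g_diff refl)+)
    (auto simp: fun_eq_iff gradp_Q_def gradp_P_def inner_prod_def inner_diff_left inner_diff_right
      inner_commute algebra_simps)

lemma has_derivative_Q_w: "((\<lambda>w. Q w p) has_derivative (\<lambda>h. gradw_Q w p \<bullet> h)) (at w)"
  unfolding Q_def power2_norm_eq_inner
  by (rule has_derivative_eq_rhs, (rule has_derivative_grad_chain[of F] has_derivative_grad_chain[of g]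
        derivative_eq_intros F_diff g_diff refl)+)
    (auto simp: fun_eq_iff gradw_Q_def inner_prod_def inner_diff_left inner_diff_right
      inner_commute algebra_simps)

lemma lipschitz_constants_nonneg: "0 \<le> Lf" "0 \<le> Lg" "0 \<le> Lf + 2 * rho * Lg"
  using lipschitz_on_nonneg[OF F_lip] lipschitz_on_nonneg[OF g_lip] rho by auto

lemma tau_pos: "0 < tau"
  using tau lipschitz_constants_nonneg(3) kappa by linarith

lemma lipschitz_on_grad_F_p:
  assumes "x \<in> X"
  shows "Lf-lipschitz_on (Y \<times> Lam) (\<lambda>p. grad F ((x, fst p), snd p))"
  by (rule lipschitz_on_comp_nonexpansive[OF F_lip]) (use assms in \<open>auto simp: dist_prod_def\<close>)

lemma lipschitz_on_grad_g_p:
  assumes "z \<in> Y"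
  shows "Lg-lipschitz_on (Y \<times> Lam) (\<lambda>p. grad g (z, snd p))"
  by (rule lipschitz_on_comp_nonexpansive[OF g_lip])
    (use assms in \<open>auto simp: dist_prod_def real_sqrt_le_mono\<close>)

lemma lipschitz_on_grad_F_w:
  assumes "p \<in> Y \<times> Lam"
  shows "Lf-lipschitz_on W (\<lambda>w. grad F ((fst w, fst p), snd p))"
proof (rule lipschitz_on_comp_nonexpansive[OF F_lip])
  fix w w' :: "'x \<times> 'y \<times> 'y \<times> 'l"
  show "dist ((fst w, fst p), snd p) ((fst w', fst p), snd p) \<le> dist w w'"
    using dist_fst_le[of w w'] by (simp add: dist_Pair_Pair)
qed (use assms in auto)

lemma lipschitz_on_grad_g_w:
  assumes "p \<in> Y \<times> Lam"
  shows "Lg-lipschitz_on W (\<lambda>w. grad g (fst (snd w), snd p))"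
proof (rule lipschitz_on_comp_nonexpansive[OF g_lip])
  fix w w' :: "'x \<times> 'y \<times> 'y \<times> 'l"
  have "dist (fst (snd w)) (fst (snd w')) \<le> dist w w'"
    by (meson dist_fst_le dist_snd_le order_trans)
  then show "dist (fst (snd w), snd p) (fst (snd w'), snd p) \<le> dist w w'"
    by (simp add: dist_Pair_Pair)
qed (use assms in auto)

lemma lipschitz_on_prox_term_w:
  "tau-lipschitz_on W (\<lambda>w. tau *\<^sub>R (p - snd (snd w)))"
proof (rule lipschitz_onI)
  fix w w' :: "'x \<times> 'y \<times> 'y \<times> 'l"
  have "dist (snd (snd w)) (snd (snd w')) \<le> dist w w'"
    by (meson dist_snd_le order_trans)
  then show "dist (tau *\<^sub>R (p - snd (snd w))) (tau *\<^sub>R (p - snd (snd w'))) \<le> tau * dist w w'"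
    using tau_pos by (simp add: dist_norm norm_minus_commute flip: scaleR_diff_right)
qed (use tau_pos in simp)

lemma lipschitz_on_gradp_P:
  assumes "x \<in> X" "z \<in> Y"
  shows "(Lf + 2 * rho * Lg)-lipschitz_on (Y \<times> Lam) (gradp_P x z)"
proof -
  have "Lf-lipschitz_on (Y \<times> Lam)
      (\<lambda>p. (snd (fst (grad F ((x, fst p), snd p))), snd (grad F ((x, fst p), snd p))))"
    by (rule nonexpansive_comp_lipschitz_on[OF lipschitz_on_grad_F_p[OF assms(1)],
          where \<psi> = "\<lambda>r. (snd (fst r), snd r)"]) (simp add: dist_prod_def real_sqrt_le_mono)
  moreover have "(rho * Lg)-lipschitz_on (Y \<times> Lam) (\<lambda>p. rho *\<^sub>R grad g p)"
    by (rule lipschitz_on_cmult_nonneg[OF g_lip rho])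
  moreover have "Lg-lipschitz_on (Y \<times> Lam) (\<lambda>p. (0::'y, snd (grad g (z, snd p))))"
    by (rule nonexpansive_comp_lipschitz_on[OF lipschitz_on_grad_g_p[OF assms(2)],
          where \<psi> = "\<lambda>r. (0, snd r)"]) (simp add: dist_prod_def)
  then have "(rho * Lg)-lipschitz_on (Y \<times> Lam) (\<lambda>p. rho *\<^sub>R (0::'y, snd (grad g (z, snd p))))"
    by (rule lipschitz_on_cmult_nonneg[OF _ rho])
  ultimately have "(Lf + rho * Lg + rho * Lg)-lipschitz_on (Y \<times> Lam) (gradp_P x z)"
    unfolding gradp_P_def by (intro lipschitz_on_add lipschitz_on_diff)
  then show ?thesis
    by (simp add: algebra_simps)
qed

lemma gradp_Q_strongly_monotone:
  assumes "w \<in> W" "p1 \<in> Y \<times> Lam" "p2 \<in> Y \<times> Lam"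
  shows "(gradp_Q w p1 - gradp_Q w p2) \<bullet> (p1 - p2) \<le> - kappa * (norm (p1 - p2))\<^sup>2"
proof -
  let ?P = "gradp_P (fst w) (fst (snd w))"
  have "(gradp_Q w p1 - gradp_Q w p2) \<bullet> (p1 - p2)
      = (?P p1 - ?P p2) \<bullet> (p1 - p2) - tau * (norm (p1 - p2))\<^sup>2"
    by (simp add: gradp_Q_def inner_diff_left inner_diff_right power2_norm_eq_inner algebra_simps)
  also have "\<dots> \<le> (Lf + 2 * rho * Lg) * (norm (p1 - p2))\<^sup>2 - tau * (norm (p1 - p2))\<^sup>2"
    using inner_diff_le_lipschitz[OF lipschitz_on_gradp_P assms(2,3)] assms(1) by auto
  also have "\<dots> \<le> - kappa * (norm (p1 - p2))\<^sup>2"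
    using mult_right_mono[OF tau, of "(norm (p1 - p2))\<^sup>2"] by (simp add: algebra_simps)
  finally show ?thesis .
qed

lemma lipschitz_on_gradp_Q_w:
  assumes "p \<in> Y \<times> Lam"
  shows "(Lf + rho * Lg + tau)-lipschitz_on W (\<lambda>w. gradp_Q w p)"
proof -
  have "Lf-lipschitz_on W
      (\<lambda>w. (snd (fst (grad F ((fst w, fst p), snd p))), snd (grad F ((fst w, fst p), snd p))))"
    by (rule nonexpansive_comp_lipschitz_on[OF lipschitz_on_grad_F_w[OF assms],
          where \<psi> = "\<lambda>r. (snd (fst r), snd r)"]) (simp add: dist_prod_def real_sqrt_le_mono)
  moreover have "Lg-lipschitz_on W (\<lambda>w. (0::'y, snd (grad g (fst (snd w), snd p))))"
    by (rule nonexpansive_comp_lipschitz_on[OF lipschitz_on_grad_g_w[OF assms],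
          where \<psi> = "\<lambda>r. (0, snd r)"]) (simp add: dist_prod_def)
  then have "(rho * Lg)-lipschitz_on W (\<lambda>w. rho *\<^sub>R (0::'y, snd (grad g (fst (snd w), snd p))))"
    by (rule lipschitz_on_cmult_nonneg[OF _ rho])
  ultimately have "(Lf + 0 + rho * Lg + tau)-lipschitz_on W (\<lambda>w. gradp_Q w p)"
    unfolding gradp_Q_def gradp_P_def
    by (intro lipschitz_on_add lipschitz_on_diff lipschitz_on_constant lipschitz_on_prox_term_w)
  then show ?thesis
    by simp
qed

lemma lipschitz_on_gradw_Q_w:
  assumes "p \<in> Y \<times> Lam"
  shows "(Lf + rho * Lg + tau)-lipschitz_on W (\<lambda>w. gradw_Q w p)"
proof -
  have "Lf-lipschitz_on W (\<lambda>w. fst (fst (grad F ((fst w, fst p), snd p))))"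
    by (rule nonexpansive_comp_lipschitz_on[OF lipschitz_on_grad_F_w[OF assms] dist_fst_fst_le])
  moreover have "(rho * Lg)-lipschitz_on W (\<lambda>w. rho *\<^sub>R fst (grad g (fst (snd w), snd p)))"
    by (intro lipschitz_on_cmult_nonneg[OF _ rho]
        nonexpansive_comp_lipschitz_on[OF lipschitz_on_grad_g_w[OF assms] dist_fst_le])
  ultimately show ?thesis
    unfolding gradw_Q_def add.assoc
    by (intro lipschitz_on_Pair_add lipschitz_on_prox_term_w)
qed

lemma lipschitz_on_gradw_Q_p:
  assumes "w \<in> W"
  shows "(Lf + rho * Lg + tau)-lipschitz_on (Y \<times> Lam) (gradw_Q w)"
proof -
  have "Lf-lipschitz_on (Y \<times> Lam) (\<lambda>p. fst (fst (grad F ((fst w, fst p), snd p))))"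
    using assms by (intro nonexpansive_comp_lipschitz_on[OF lipschitz_on_grad_F_p dist_fst_fst_le]) auto
  moreover have "(rho * Lg)-lipschitz_on (Y \<times> Lam) (\<lambda>p. rho *\<^sub>R fst (grad g (fst (snd w), snd p)))"
    using assms by (intro lipschitz_on_cmult_nonneg[OF _ rho]
        nonexpansive_comp_lipschitz_on[OF lipschitz_on_grad_g_p dist_fst_le]) auto
  ultimately show ?thesis
    unfolding gradw_Q_def add.assoc
    using tau_pos by (intro lipschitz_on_Pair_add lipschitz_on_scaleR_shift) auto
qed

definition maximizer :: "'x \<times> 'y \<times> 'y \<times> 'l \<Rightarrow> 'y \<times> 'l" where
  "maximizer w = (SOME p. p \<in> Y \<times> Lam \<and> (\<forall>q\<in>Y \<times> Lam. Q w q \<le> Q w p))"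

lemma
  shows maximizer_mem: "maximizer w \<in> Y \<times> Lam"
    and maximizer_max: "q \<in> Y \<times> Lam \<Longrightarrow> Q w q \<le> Q w (maximizer w)"
proof -
  have "continuous_on (Y \<times> Lam) (Q w)"
    using has_derivative_Q_p by (meson has_derivative_at_withinI has_derivative_continuous_on)
  then have "\<exists>p\<in>Y \<times> Lam. \<forall>q\<in>Y \<times> Lam. Q w q \<le> Q w p"
    using continuous_attains_sup[of "Y \<times> Lam" "Q w"] Y Lam by (simp add: compact_Times)
  then have "maximizer w \<in> Y \<times> Lam \<and> (\<forall>q\<in>Y \<times> Lam. Q w q \<le> Q w (maximizer w))"
    unfolding maximizer_def by (rule someI2_bex) auto
  then show "maximizer w \<in> Y \<times> Lam" "q \<in> Y \<times> Lam \<Longrightarrow> Q w q \<le> Q w (maximizer w)"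
    by auto
qed

lemma dist_maximizers_le:
  assumes "w1 \<in> W" "w2 \<in> W" "p1 \<in> Y \<times> Lam" "p2 \<in> Y \<times> Lam"
    and "\<forall>q\<in>Y \<times> Lam. Q w1 q \<le> Q w1 p1" "\<forall>q\<in>Y \<times> Lam. Q w2 q \<le> Q w2 p2"
  shows "kappa * dist p1 p2 \<le> (Lf + 2 * rho * Lg + tau) * dist w1 w2"
proof -
  have "kappa * norm (p1 - p2) \<le> norm (gradp_Q w1 p2 - gradp_Q w2 p2)"
    using Y(1) Lam(1) assms(3-6) kappa
    by (intro maximizers_norm_diff_le[where F = "Q w1" and F' = "Q w2" and G = "gradp_Q w1"]
        gradp_Q_strongly_monotone assms(1) has_derivative_at_withinI[OF has_derivative_Q_p])
      (auto simp: convex_Times)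
  also have "\<dots> \<le> (Lf + rho * Lg + tau) * dist w1 w2"
    using lipschitz_onD[OF lipschitz_on_gradp_Q_w[OF assms(4)] assms(1,2)] by (simp add: dist_norm)
  also have "\<dots> \<le> (Lf + 2 * rho * Lg + tau) * dist w1 w2"
    using rho lipschitz_on_nonneg[OF g_lip] by (intro mult_right_mono) auto
  finally show ?thesis
    by (simp add: dist_norm)
qed

lemma maximizer_unique:
  assumes "w \<in> W" "p \<in> Y \<times> Lam" "\<forall>q\<in>Y \<times> Lam. Q w q \<le> Q w p"
  shows "p = maximizer w"
proof -
  have "kappa * dist p (maximizer w) \<le> (Lf + 2 * rho * Lg + tau) * dist w w"
    using dist_maximizers_le[OF assms(1,1,2) maximizer_mem assms(3)] maximizer_max by blast
  then show ?thesis
    using kappa by (simp add: mult_le_0_iff)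
qed

lemma lipschitz_on_maximizer: "((Lf + 2 * rho * Lg + tau) / kappa)-lipschitz_on W maximizer"
proof (rule lipschitz_onI)
  fix w1 w2 assume "w1 \<in> W" "w2 \<in> W"
  with dist_maximizers_le[OF this maximizer_mem maximizer_mem] maximizer_max kappa
  show "dist (maximizer w1) (maximizer w2) \<le> (Lf + 2 * rho * Lg + tau) / kappa * dist w1 w2"
    by (simp add: field_simps)
next
  show "0 \<le> (Lf + 2 * rho * Lg + tau) / kappa"
    using tau_pos lipschitz_constants_nonneg(3) kappa by simp
qed

lemma value_has_derivative:
  assumes "w \<in> W"
  shows "((\<lambda>w. Q w (maximizer w)) has_derivative (\<lambda>h. gradw_Q w (maximizer w) \<bullet> h)) (at w within W)"
  using X(1) Y(1)
  by (intro value_function_has_derivative[OF _ assms has_derivative_at_withinI[OF has_derivative_Q_w]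
        lipschitz_on_gradw_Q_w lipschitz_on_gradw_Q_p maximizer_mem maximizer_max lipschitz_on_maximizer])
    (auto simp: convex_Times)

lemma lipschitz_on_value_gradient:
  "((Lf + rho * Lg + tau) * (1 + (Lf + 2 * rho * Lg + tau) / kappa))-lipschitz_on W
     (\<lambda>w. gradw_Q w (maximizer w))"
  using X(2) Y(3)
  by (intro lipschitz_on_gradient_at_maximizer[OF _ lipschitz_on_gradw_Q_w lipschitz_on_gradw_Q_p
        maximizer_mem lipschitz_on_maximizer]) auto

lemma grad_partials:
  "grad (\<lambda>x'. F ((x', y), l)) x = fst (fst (grad F ((x, y), l)))"
  "grad (\<lambda>z'. g (z', l)) z = fst (grad g (z, l))"
proof -
  have "(\<lambda>q. F (q, l)) differentiable (at (x, y))"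
    by (rule differentiable_compose[of F, OF F_diff])
      (auto intro!: derivative_eq_intros simp: differentiable_def)
  then show "grad (\<lambda>x'. F ((x', y), l)) x = fst (fst (grad F ((x, y), l)))"
    using grad_partial_fst[OF F_diff] grad_partial_fst[of "\<lambda>q. F (q, l)"] by simp
  show "grad (\<lambda>z'. g (z', l)) z = fst (grad g (z, l))"
    by (rule grad_partial_fst[OF g_diff])
qed

end

lemma ffun_differentiable:
  assumes "\<forall>p. fbar differentiable (at p)"
  shows "ffun fbar A B c differentiable (at q)"
proof -
  have "ffun fbar A B c = (\<lambda>q. fbar (fst q) + snd q \<bullet> (A *v fst (fst q) + B *v snd (fst q) - c))"
    by (auto simp: ffun_def fun_eq_iff split: prod.splits)
  moreover have fbar_diff: "fbar differentiable (at (fst q))"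
    using assms by blast
  have "(\<lambda>q. fbar (fst q) + snd q \<bullet> (A *v fst (fst q) + B *v snd (fst q) - c)) differentiable (at q)"
    by (rule differentiableI, (rule has_derivative_grad_chain[of fbar fst q, OF fbar_diff]
        derivative_eq_intros bounded_linear.has_derivative[OF matrix_vector_mul_bounded_linear] refl)+)
  ultimately show ?thesis
    by simp
qed

theorem mainTheorem4:
  fixes X :: "(real^'dx) set" and Y :: "(real^'dy) set" and Lam :: "(real^'dl) set"
    and fbar :: "(real^'dx) \<times> (real^'dy) \<Rightarrow> real"
    and A :: "(real^'dx^'dl)" and B :: "(real^'dy^'dl)" and c :: "(real^'dl)"
    and g :: "(real^'dy) \<times> (real^'dl) \<Rightarrow> real"
    and Lf Lg rho kappa tau :: real
  assumes X: "convex X" "compact X" "X \<noteq> {}"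
    and Y: "convex Y" "compact Y" "Y \<noteq> {}"
    and Lam: "convex Lam" "compact Lam" "Lam \<noteq> {}"
    and fbar_C1: "\<forall>p. fbar differentiable (at p)" "continuous_on UNIV (grad fbar)"
    and Lf_pos: "Lf > 0"
    and Lf_lip: "Lf-lipschitz_on ((X \<times> Y) \<times> Lam) (grad (ffun fbar A B c))"
    and g_C1: "\<forall>p. g differentiable (at p)" "continuous_on UNIV (grad g)"
    and Lg_lip: "Lg-lipschitz_on (Y \<times> Lam) (grad g)"
    and g_convex: "\<forall>l\<in>Lam. convex_on UNIV (\<lambda>y. g (y, l))"
    and saddle: "\<exists>zs\<in>Y. \<exists>ls\<in>Lam.
                   g (zs, ls) = (SUP l\<in>Lam. INF z\<in>Y. g (z, l)) \<and>
                   g (zs, ls) = (INF z\<in>Y. SUP l\<in>Lam. g (z, l))"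
    and rho_pos: "rho > 0"
    and kappa_pos: "kappa > 0"
    and tau_ge: "tau \<ge> (Lf + 2 * rho * Lg) + kappa"
  shows "\<exists>ys ls.
     (\<forall>w \<in> X \<times> Y \<times> (UNIV::(real^'dy) set) \<times> (UNIV::(real^'dl) set).
        case w of (x, z, u, v) \<Rightarrow>
          (ys w, ls w) \<in> Y \<times> Lam \<and>
          (\<forall>p\<in>Y \<times> Lam. Qfun fbar A B c g rho tau x z u v (fst p) (snd p)
                          \<le> Qfun fbar A B c g rho tau x z u v (ys w) (ls w)) \<and>
          (\<forall>p\<in>Y \<times> Lam.
             (\<forall>q\<in>Y \<times> Lam. Qfun fbar A B c g rho tau x z u v (fst q) (snd q)
                            \<le> Qfun fbar A B c g rho tau x z u v (fst p) (snd p))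
             \<longrightarrow> p = (ys w, ls w))) \<and>
     (\<forall>w1 \<in> X \<times> Y \<times> (UNIV::(real^'dy) set) \<times> (UNIV::(real^'dl) set).
      \<forall>w2 \<in> X \<times> Y \<times> (UNIV::(real^'dy) set) \<times> (UNIV::(real^'dl) set).
        norm ((ys w1, ls w1) - (ys w2, ls w2))
          \<le> ((Lf + 2 * rho * Lg) + tau) / kappa * norm (w1 - w2)) \<and>
     (let D = X \<times> Y \<times> (UNIV::(real^'dy) set) \<times> (UNIV::(real^'dl) set);
          G = (\<lambda>(x, z, u, v).
                 (grad (\<lambda>x'. ffun fbar A B c ((x', ys (x, z, u, v)), ls (x, z, u, v))) x,
                  rho *\<^sub>R grad (\<lambda>z'. g (z', ls (x, z, u, v))) z,
                  tau *\<^sub>R (ys (x, z, u, v) - u),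
                  tau *\<^sub>R (ls (x, z, u, v) - v)));
          Lth = (Lf + rho * Lg + 2 * tau) * (1 + ((Lf + 2 * rho * Lg) + tau) / kappa)
      in (\<forall>w\<in>D. (theta fbar A B c g rho tau Y Lam has_derivative (\<lambda>h. G w \<bullet> h)) (at w within D)) \<and>
         continuous_on D G \<and>
         (\<forall>w1\<in>D. \<forall>w2\<in>D. norm (G w1 - G w2) \<le> Lth * norm (w1 - w2)))"
proof -
  interpret proximal_saddle "ffun fbar A B c" g X Y Lam Lf Lg rho tau kappa
  proof unfold_locales
    show "ffun fbar A B c differentiable (at q)" for q
      by (rule ffun_differentiable[OF fbar_C1(1)])
    show "g differentiable (at q)" for q
      using g_C1(1) by blast
    show "0 \<le> rho"
      using rho_pos by simp
  qed (fact Lf_lip Lg_lip X(1,3) Y Lam kappa_pos tau_ge)+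
  have Q_eq: "Qfun fbar A B c g rho tau x z u v y l = Q (x, z, u, v) (y, l)" for x z u v y l
    by (simp add: Qfun_def Pfun_def Q_def)
  have theta_eq: "theta fbar A B c g rho tau Y Lam = (\<lambda>w. Q w (maximizer w))"
    by (auto simp: fun_eq_iff theta_def Q_eq intro!: cSup_eq_maximum maximizer_mem maximizer_max)
  have G_eq: "(\<lambda>(x, z, u, v).
        (grad (\<lambda>x'. ffun fbar A B c ((x', fst (maximizer (x, z, u, v))), snd (maximizer (x, z, u, v)))) x,
         rho *\<^sub>R grad (\<lambda>z'. g (z', snd (maximizer (x, z, u, v)))) z,
         tau *\<^sub>R (fst (maximizer (x, z, u, v)) - u), tau *\<^sub>R (snd (maximizer (x, z, u, v)) - v)))
      = (\<lambda>w. gradw_Q w (maximizer w))"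
    by (auto simp: fun_eq_iff gradw_Q_def grad_partials prod_eq_iff)
  have per_w: "\<forall>w\<in>W. maximizer w \<in> Y \<times> Lam \<and> (\<forall>p\<in>Y \<times> Lam. Q w p \<le> Q w (maximizer w)) \<and>
      (\<forall>p\<in>Y \<times> Lam. (\<forall>q\<in>Y \<times> Lam. Q w q \<le> Q w p) \<longrightarrow> p = maximizer w)"
    using maximizer_mem maximizer_max maximizer_unique by blast
  have lip_grad: "((Lf + rho * Lg + 2 * tau) * (1 + (Lf + 2 * rho * Lg + tau) / kappa))-lipschitz_on W
      (\<lambda>w. gradw_Q w (maximizer w))"
    using tau_pos lipschitz_constants_nonneg kappa
    by (intro lipschitz_on_mono[OF lipschitz_on_value_gradient order_refl] mult_right_mono) auto
  show ?thesis
    unfolding Let_def theta_eq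
    apply (intro exI[of _ "\<lambda>w. fst (maximizer w)"] exI[of _ "\<lambda>w. snd (maximizer w)"])
    unfolding G_eq
    using per_w lipschitz_onD[OF lipschitz_on_maximizer] value_has_derivative
      lipschitz_on_continuous_on[OF lip_grad] lipschitz_onD[OF lip_grad]
    by (auto simp: Q_eq dist_norm)
qed

end
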